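(* Fix any total budget $\mathrm{TB}\in\mathbb N_0$. If the integers satisfy $n>m$, then the integer game forms satisfy $(n)>(m)$.
   Context: Game forms are defined recursively: $G=\{G^{\mathcal L}\mid G^{\mathcal R}\}$ with finite sets of Left and Right options, and finite birthday. Integer game forms: $(0)=\{\varnothing\mid\varnothing\}$; for $n\in\mathbb N$, $(n)=\{(n-1)\mid\varnothing\}$ and $(-n)=\overline{(n)}=\{\varnothing\mid(-(n-1))\}$, where the conjugate is $\bar G=\{\overline{G^{\mathcal R}}\mid\overline{G^{\mathcal L}}\}$. The budget set for total budget $\mathrm{TB}$ is $\mathcal B=\{0,\dots,\mathrm{TB},\hat 0,\dots,\widehat{\mathrm{TB}}\}$: state $p$ (resp. $\hat p$) means Left holds $p$ dollars and Right holds $\mathrm{TB}-p$, and Right (resp. Left) holds the tie-breaking marker. Play of $(G,\tilde p)$: at every position (terminal ones included) both players bid simultaneously, Left $\ell\in\{0,\dots,p\}$, Right $r\in\{0,\dots,\mathrm{TB}-p\}$. If Left holds the marker (state $\hat p$): if $\ell>r$ Left moves to $(G^L,\widehat{p-\ell})$, or, including the marker (allowed when $\ell\ge r$), to $(G^L,p-\ell)$; if $\ell=r$ Left wins, the marker passes to Right, play continues at $(G^L,p-\ell)$; if $\ell<r$ Right moves to $(G^R,\widehat{p+r})$. Symmetrically when Right holds the marker (state $p$): if $r>\ell$ Right moves to $(G^R,p+r)$ or, including the marker, to $(G^R,\widehat{p+r})$; if $r=\ell$ Right wins, the marker passes to Left, play continues at $(G^R,\widehat{p+r})$; if $r<\ell$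 Left moves to $(G^L,p-\ell)$. A player who wins a bid but has no option loses. $o(G,\tilde p)\in\{\mathrm L,\mathrm R\}$ is the winner under optimal play; $\mathrm L>\mathrm R$. Disjunctive sum $G+H=\{G^{\mathcal L}+H,G+H^{\mathcal L}\mid G^{\mathcal R}+H,G+H^{\mathcal R}\}$. $G\ge H$ means $o(G+X,\tilde p)\ge o(H+X,\tilde p)$ for all game forms $X$ and all $\tilde p\in\mathcal B$; $G>H$ means $G\ge H$ and not $H\ge G$. *)

theory Defs
  imports Main "HOL-Library.FSet"
begin

datatype game = Game (lopts: "game fset") (ropts: "game fset")

primrec birthday :: "game \<Rightarrow> nat" where
  "birthday (Game L R) = Suc (Max (insert 0 (fset (fimage birthday L |\<union>| fimage birthday R))))"

lemma birthday_lopt: "G' |\<in>| lopts G \<Longrightarrow> birthday G' < birthday G"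
  by (cases G) (auto simp: le_imp_less_Suc intro!: Max_ge)

lemma birthday_ropt: "G' |\<in>| ropts G \<Longrightarrow> birthday G' < birthday G"
  by (cases G) (auto simp: le_imp_less_Suc intro!: Max_ge)

primrec conj :: "game \<Rightarrow> game" where
  "conj (Game L R) = Game (fimage conj R) (fimage conj L)"

function gsum :: "game \<Rightarrow> game \<Rightarrow> game" where
  "gsum G H = Game
     ((\<lambda>GL. gsum GL H) |`| lopts G |\<union>| (\<lambda>HL. gsum G HL) |`| lopts H)
     ((\<lambda>GR. gsum GR H) |`| ropts G |\<union>| (\<lambda>HR. gsum G HR) |`| ropts H)"
  by auto
termination
  by (relation "measure (\<lambda>(G, H). birthday G + birthday H)")
     (auto dest: birthday_lopt birthday_ropt)

primrec nat_game :: "nat \<Rightarrow> game" where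
  "nat_game 0 = Game {||} {||}"
| "nat_game (Suc n) = Game {|nat_game n|} {||}"

definition int_game :: "int \<Rightarrow> game" where
  "int_game n = (if 0 \<le> n then nat_game (nat n) else conj (nat_game (nat (- n))))"

text \<open>A budget state is a pair (p, h): Left holds p dollars, Right holds TB - p;
h = True means Left holds the tie-breaking marker (the state \<open>\<hat>p\<close>),
h = False means Right holds it (the state p).
\<open>lwin TB G p h\<close> means: Left has a (pure) strategy that wins (G, state) whatever Right does.\<close>
inductive lwin :: "nat \<Rightarrow> game \<Rightarrow> nat \<Rightarrow> bool \<Rightarrow> bool" for TB :: nat where
  left_marker:
  "\<lbrakk> l \<le> p;
     \<forall>r. r \<le> TB - p \<longrightarrow>
        (if l \<ge> r then
           (\<exists>GL h'. GL |\<in>| lopts G \<and> (h' = False \<or> l > r) \<and> lwin TB GL (p - l) h')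
         else
           (\<forall>GR. GR |\<in>| ropts G \<longrightarrow> lwin TB GR (p + r) True)) \<rbrakk>
   \<Longrightarrow> lwin TB G p True"
| right_marker:
  "\<lbrakk> l \<le> p;
     \<forall>r. r \<le> TB - p \<longrightarrow>
        (if r \<ge> l then
           (\<forall>GR h'. GR |\<in>| ropts G \<and> (h' = True \<or> r > l) \<longrightarrow> lwin TB GR (p + r) h')
         else
           (\<exists>GL. GL |\<in>| lopts G \<and> lwin TB GL (p - l) False)) \<rbrakk>
   \<Longrightarrow> lwin TB G p False"

text \<open>Outcome: True = L, False = R (so L > R corresponds to True > False).\<close>
definition outcome :: "nat \<Rightarrow> game \<Rightarrow> nat \<Rightarrow> bool \<Rightarrow> bool" where
  "outcome TB G p h = lwin TB G p h"

definition budgets :: "nat \<Rightarrow> (nat \<times> bool) set" where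
  "budgets TB = {(p, h). p \<le> TB}"

definition game_ge :: "nat \<Rightarrow> game \<Rightarrow> game \<Rightarrow> bool" where
  "game_ge TB G H \<longleftrightarrow>
     (\<forall>X. \<forall>(p, h) \<in> budgets TB. outcome TB (gsum G X) p h \<ge> outcome TB (gsum H X) p h)"

definition game_gt :: "nat \<Rightarrow> game \<Rightarrow> game \<Rightarrow> bool" where
  "game_gt TB G H \<longleftrightarrow> game_ge TB G H \<and> \<not> game_ge TB H G"

end

theory Submission
  imports Defs
begin

text \<open>
  Call G dominant over H if every Left option of H is dominated by a Left option of G and every
  Right option of G dominates a Right option of H. Replacing a game by a dominant one can only
  help Left, in every sum and from every budget state; since (n) is dominant over (m) whenever
  m \<le> n, this gives (n) \<ge> (m).

  For strictness, note that along every play of a sum of integers Left makes exactly a moves and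
  Right exactly b moves. Money is then irrelevant: every won bid costs its winner one move, a tie
  forces the marker holder to move, and bidding 0 is optimal for both players. So Left wins iff
  b < a, or a = b and Right holds the marker. With X = (-m) and Left holding the marker, Left
  thus wins (n) + X but loses (m) + X.
\<close>

declare gsum.simps[simp del]

lemma lopts_gsum: "lopts (gsum G H) = (\<lambda>GL. gsum GL H) |`| lopts G |\<union>| (\<lambda>HL. gsum G HL) |`| lopts H"
  by (subst gsum.simps) simp

lemma ropts_gsum: "ropts (gsum G H) = (\<lambda>GR. gsum GR H) |`| ropts G |\<union>| (\<lambda>HR. gsum G HR) |`| ropts H"
  by (subst gsum.simps) simp

lemma lopts_conj: "lopts (conj G) = conj |`| ropts G"
  by (cases G) simp

lemma ropts_conj: "ropts (conj G) = conj |`| lopts G"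
  by (cases G) simp

lemma ropts_nat_game [simp]: "ropts (nat_game n) = {||}"
  by (cases n) simp_all

lemma lopts_conj_nat_game [simp]: "lopts (conj (nat_game n)) = {||}"
  by (cases n) simp_all

inductive dominates :: "game \<Rightarrow> game \<Rightarrow> bool" where
  "\<lbrakk> \<forall>HL. HL |\<in>| lopts H \<longrightarrow> (\<exists>GL. GL |\<in>| lopts G \<and> dominates GL HL);
     \<forall>GR. GR |\<in>| ropts G \<longrightarrow> (\<exists>HR. HR |\<in>| ropts H \<and> dominates GR HR) \<rbrakk>
   \<Longrightarrow> dominates G H"

lemma dominatesD:
  assumes "dominates G H"
  shows "HL |\<in>| lopts H \<Longrightarrow> \<exists>GL. GL |\<in>| lopts G \<and> dominates GL HL"
    and "GR |\<in>| ropts G \<Longrightarrow> \<exists>HR. HR |\<in>| ropts H \<and> dominates GR HR"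
  using assms by (auto elim: dominates.cases)

lemma lwin_dominates: "lwin TB H p h \<Longrightarrow> dominates G H \<Longrightarrow> lwin TB G p h"
proof (induction arbitrary: G rule: lwin.induct)
  case (left_marker l p H)
  note lopt = dominatesD(1)[OF left_marker.prems] and ropt = dominatesD(2)[OF left_marker.prems]
  show ?case
  proof (intro lwin.left_marker[OF left_marker.hyps(1)] allI impI, goal_cases)
    case (1 r)
    then show ?case
    proof (cases "r \<le> l")
      case True
      with left_marker.IH[rule_format, OF \<open>r \<le> TB - p\<close>] obtain HL h' where
        HL: "HL |\<in>| lopts H" and "h' = False \<or> r < l"
        and "\<forall>G'. dominates G' HL \<longrightarrow> lwin TB G' (p - l) h'"
        by simp blast
      moreover from lopt[OF HL] obtain GL where "GL |\<in>| lopts G" "dominates GL HL" by blast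
      ultimately show ?thesis using True by auto
    next
      case False
      with left_marker.IH \<open>r \<le> TB - p\<close> ropt show ?thesis by fastforce
    qed
  qed
next
  case (right_marker l p H)
  note lopt = dominatesD(1)[OF right_marker.prems] and ropt = dominatesD(2)[OF right_marker.prems]
  show ?case
  proof (intro lwin.right_marker[OF right_marker.hyps(1)] allI impI, goal_cases)
    case (1 r)
    then show ?case
    proof (cases "l \<le> r")
      case True
      with right_marker.IH \<open>r \<le> TB - p\<close> ropt show ?thesis by fastforce
    next
      case False
      with right_marker.IH[rule_format, OF \<open>r \<le> TB - p\<close>] obtain HL where
        HL: "HL |\<in>| lopts H" and "\<forall>G'. dominates G' HL \<longrightarrow> lwin TB G' (p - l) False"
        by simp blast
      moreover from lopt[OF HL] obtain GL where "GL |\<in>| lopts G" "dominates GL HL" by blast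
      ultimately show ?thesis using False by auto
    qed
  qed
qed

lemma dominates_gsum: "dominates G H \<Longrightarrow> dominates (gsum G X) (gsum H X)"
proof (induction arbitrary: X rule: dominates.induct)
  case (1 H G)
  show ?case
  proof (induction X)
    case (Game XL XR)
    show ?case
      using 1 Game by (intro dominates.intros) (fastforce simp: lopts_gsum ropts_gsum)+
  qed
qed

lemma dominates_imp_game_ge: "dominates G H \<Longrightarrow> game_ge TB G H"
  unfolding game_ge_def outcome_def budgets_def
  by (auto intro: lwin_dominates dominates_gsum)

lemma dominates_vacuous: "lopts H = {||} \<Longrightarrow> ropts G = {||} \<Longrightarrow> dominates G H"
  by (auto intro: dominates.intros)

lemma dominates_conj: "dominates G H \<Longrightarrow> dominates (conj H) (conj G)"
proof (induction rule: dominates.induct)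
  case (1 H G)
  show ?case
  proof (rule dominates.intros)
    show "\<forall>X. X |\<in>| lopts (conj G) \<longrightarrow> (\<exists>Y. Y |\<in>| lopts (conj H) \<and> dominates Y X)"
      using "1"(2) by (auto simp: lopts_conj)
    show "\<forall>Y. Y |\<in>| ropts (conj H) \<longrightarrow> (\<exists>X. X |\<in>| ropts (conj G) \<and> dominates Y X)"
      using "1"(1) by (auto simp: ropts_conj)
  qed
qed

lemma dominates_nat_game: "m \<le> n \<Longrightarrow> dominates (nat_game n) (nat_game m)"
proof (induction n arbitrary: m)
  case 0
  then show ?case by (simp add: dominates_vacuous)
next
  case (Suc n)
  then show ?case
    by (cases m) (auto intro: dominates.intros)
qed

lemma dominates_int_game: "m \<le> n \<Longrightarrow> dominates (int_game n) (int_game m)"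
  by (cases "0 \<le> m"; cases "0 \<le> n")
     (simp_all add: int_game_def dominates_nat_game dominates_conj dominates_vacuous)

lemma game_ge_int_game: "m \<le> n \<Longrightarrow> game_ge TB (int_game n) (int_game m)"
  by (simp add: dominates_imp_game_ge dominates_int_game)

inductive exact_moves :: "nat \<Rightarrow> nat \<Rightarrow> game \<Rightarrow> bool" where
  "\<lbrakk> lopts K = {||} \<longleftrightarrow> a = 0; \<forall>KL. KL |\<in>| lopts K \<longrightarrow> exact_moves (a - 1) b KL;
     ropts K = {||} \<longleftrightarrow> b = 0; \<forall>KR. KR |\<in>| ropts K \<longrightarrow> exact_moves a (b - 1) KR \<rbrakk>
   \<Longrightarrow> exact_moves a b K"

lemma exact_movesD:
  assumes "exact_moves a b K"
  shows "lopts K = {||} \<longleftrightarrow> a = 0" "ropts K = {||} \<longleftrightarrow> b = 0"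
    and "KL |\<in>| lopts K \<Longrightarrow> exact_moves (a - 1) b KL"
    and "KR |\<in>| ropts K \<Longrightarrow> exact_moves a (b - 1) KR"
  using assms by (auto elim: exact_moves.cases)

lemma exact_moves_gsum:
  "exact_moves a b G \<Longrightarrow> exact_moves c d H \<Longrightarrow> exact_moves (a + c) (b + d) (gsum G H)"
proof (induction G H arbitrary: a b c d rule: gsum.induct)
  case (1 G H)
  note G = exact_movesD[OF "1.prems"(1)] and H = exact_movesD[OF "1.prems"(2)]
  have "exact_moves (a + c - 1) (b + d) (gsum GL H)" if GL: "GL |\<in>| lopts G" for GL
  proof -
    from GL G(1) have "a - 1 + c = a + c - 1" by auto
    with "1.IH"(1)[OF GL G(3)[OF GL] "1.prems"(2)] show ?thesis by simp
  qed
  moreover have "exact_moves (a + c - 1) (b + d) (gsum G HL)" if HL: "HL |\<in>| lopts H" for HL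
  proof -
    from HL H(1) have "a + (c - 1) = a + c - 1" by auto
    with "1.IH"(2)[OF HL "1.prems"(1) H(3)[OF HL]] show ?thesis by simp
  qed
  moreover have "exact_moves (a + c) (b + d - 1) (gsum GR H)" if GR: "GR |\<in>| ropts G" for GR
  proof -
    from GR G(2) have "b - 1 + d = b + d - 1" by auto
    with "1.IH"(3)[OF GR G(4)[OF GR] "1.prems"(2)] show ?thesis by simp
  qed
  moreover have "exact_moves (a + c) (b + d - 1) (gsum G HR)" if HR: "HR |\<in>| ropts H" for HR
  proof -
    from HR H(2) have "b + (d - 1) = b + d - 1" by auto
    with "1.IH"(4)[OF HR "1.prems"(1) H(4)[OF HR]] show ?thesis by simp
  qed
  moreover have "lopts (gsum G H) = {||} \<longleftrightarrow> a + c = 0" "ropts (gsum G H) = {||} \<longleftrightarrow> b + d = 0"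
    using G(1,2) H(1,2) by (auto simp: lopts_gsum ropts_gsum)
  ultimately show ?case
    by (intro exact_moves.intros) (auto simp: lopts_gsum ropts_gsum)
qed

lemma exact_moves_nat_game: "exact_moves n 0 (nat_game n)"
  by (induction n) (auto intro: exact_moves.intros)

lemma exact_moves_conj: "exact_moves a b G \<Longrightarrow> exact_moves b a (conj G)"
proof (induction rule: exact_moves.induct)
  case (1 K a b)
  show ?case
  proof (rule exact_moves.intros)
    show "lopts (conj K) = {||} \<longleftrightarrow> b = 0" "ropts (conj K) = {||} \<longleftrightarrow> a = 0"
      using "1.hyps" by (simp_all add: lopts_conj ropts_conj)
    show "\<forall>KL. KL |\<in>| lopts (conj K) \<longrightarrow> exact_moves (b - 1) a KL"
      using "1.IH"(2) by (auto simp: lopts_conj)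
    show "\<forall>KR. KR |\<in>| ropts (conj K) \<longrightarrow> exact_moves b (a - 1) KR"
      using "1.IH"(1) by (auto simp: ropts_conj)
  qed
qed

lemma exact_moves_int_game: "exact_moves (nat n) (nat (- n)) (int_game n)"
  using exact_moves_nat_game exact_moves_conj by (simp add: int_game_def)

lemma exact_moves_imp_lwin:
  "exact_moves a b K \<Longrightarrow> b < a \<or> (a = b \<and> \<not> h) \<Longrightarrow> lwin TB K p h"
proof (induction arbitrary: p h rule: exact_moves.induct)
  case (1 K a b)
  have IH_left: "lwin TB KL q h'" if "KL |\<in>| lopts K" "b < a - 1 \<or> (a - 1 = b \<and> \<not> h')" for KL q h'
    using "1.IH"(1) that by blast
  have IH_right: "lwin TB KR q h'" if "KR |\<in>| ropts K" "b - 1 < a \<or> (a = b - 1 \<and> \<not> h')" for KR q h'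
    using "1.IH"(2) that by blast
  show ?case
  proof (cases h)
    case True
    with "1.prems" have "b < a" by simp
    with "1.hyps"(1) obtain KL where KL: "KL |\<in>| lopts K" by blast
    from \<open>b < a\<close> have "lwin TB KL p False"
      by (intro IH_left[OF KL]) arith
    moreover from \<open>b < a\<close> have "lwin TB KR (p + r) True" if "KR |\<in>| ropts K" for KR r
      by (intro IH_right[OF that]) arith
    ultimately have "lwin TB K p True"
      using KL by (intro lwin.left_marker[of 0]) auto
    with True show ?thesis by simp
  next
    case False
    with "1.prems" have "b \<le> a" by auto
    have "lwin TB KR (p + r) h'" if "KR |\<in>| ropts K" for KR r h'
    proof -
      from that "1.hyps"(2) have "b \<noteq> 0" by auto
      with \<open>b \<le> a\<close> show ?thesis
        by (intro IH_right[OF that]) arith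
    qed
    then have "lwin TB K p False"
      by (intro lwin.right_marker[of 0]) auto
    with False show ?thesis by simp
  qed
qed

lemma lwin_exact_moves_necessary:
  "lwin TB K p h \<Longrightarrow> exact_moves a b K \<Longrightarrow> b < a \<or> (a = b \<and> \<not> h)"
proof (induction arbitrary: a b rule: lwin.induct)
  case (left_marker l p K)
  note K = exact_movesD[OF left_marker.prems]
  from left_marker.IH[rule_format, of 0] obtain KL h' where KL: "KL |\<in>| lopts K"
    and IH: "\<And>a b. exact_moves a b KL \<Longrightarrow> b < a \<or> (a = b \<and> \<not> h')"
    by auto
  from IH[OF K(3)[OF KL]] have "b < a - 1 \<or> a - 1 = b" by auto
  moreover from KL K(1) have "a \<noteq> 0" by auto
  ultimately show ?case by arith
next
  case (right_marker l p K)
  note K = exact_movesD[OF right_marker.prems]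
  show ?case
  proof (cases "l = 0")
    case True
    show ?thesis
    proof (cases "b = 0")
      case False
      with K(2) obtain KR where KR: "KR |\<in>| ropts K" by blast
      with True right_marker.IH[rule_format, of 0]
      have "\<And>a b. exact_moves a b KR \<Longrightarrow> b < a" by auto
      from this[OF K(4)[OF KR]] show ?thesis by arith
    qed arith
  next
    case False
    with right_marker.IH[rule_format, of 0] obtain KL where KL: "KL |\<in>| lopts K"
      and IH: "\<And>a b. exact_moves a b KL \<Longrightarrow> b < a \<or> a = b"
      by auto
    from IH[OF K(3)[OF KL]] have "b < a - 1 \<or> a - 1 = b" by auto
    moreover from KL K(1) have "a \<noteq> 0" by auto
    ultimately show ?thesis by arith
  qed
qed

lemma lwin_iff_exact_moves:
  "exact_moves a b K \<Longrightarrow> lwin TB K p h \<longleftrightarrow> b < a \<or> (a = b \<and> \<not> h)"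
  using exact_moves_imp_lwin lwin_exact_moves_necessary by blast

lemma lwin_gsum_int_game_iff:
  "lwin TB (gsum (int_game n) (int_game k)) p h \<longleftrightarrow> 0 < n + k \<or> (n + k = 0 \<and> \<not> h)"
proof -
  have "exact_moves (nat n + nat k) (nat (- n) + nat (- k)) (gsum (int_game n) (int_game k))"
    by (intro exact_moves_gsum exact_moves_int_game)
  then have "lwin TB (gsum (int_game n) (int_game k)) p h \<longleftrightarrow>
      nat (- n) + nat (- k) < nat n + nat k \<or> (nat n + nat k = nat (- n) + nat (- k) \<and> \<not> h)"
    by (rule lwin_iff_exact_moves)
  also have "\<dots> \<longleftrightarrow> 0 < n + k \<or> (n + k = 0 \<and> \<not> h)"
    by linarith
  finally show ?thesis .
qed

lemma not_game_ge_int_game: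
  assumes "m < n"
  shows "\<not> game_ge TB (int_game m) (int_game n)"
proof
  let ?X = "int_game (- m)"
  assume "game_ge TB (int_game m) (int_game n)"
  then have "outcome TB (gsum (int_game n) ?X) 0 True \<le> outcome TB (gsum (int_game m) ?X) 0 True"
    unfolding game_ge_def budgets_def by blast
  with assms show False
    by (simp add: outcome_def lwin_gsum_int_game_iff)
qed

theorem mainTheorem15:
  fixes TB :: nat and n m :: int
  assumes "n > m"
  shows "game_gt TB (int_game n) (int_game m)"
  using assms by (simp add: game_gt_def game_ge_int_game not_game_ge_int_game)

end
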